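(* Let $L$ be a finitely additive expectation on a linear space $\mathcal{L}=\{X_i:i\in I\}$ of real-valued functions on $\Omega$ containing all constants. Then the collection of marginal previsions $P(X_i)=L(X_i)$, $i\in I$, is coherent$_1$.
   Context: Random variables are real-valued functions on a nonempty set $\Omega$. A finitely additive expectation on a linear space $\mathcal{L}$ containing all constants is a map $L:\mathcal{L}\to\mathbb{R}\cup\{\pm\infty\}$ that is nonnegative ($X\le Y$ implies $L(X)\le L(Y)$), extended-linear ($L(\alpha X+\beta Y)=\alpha L(X)+\beta L(Y)$ for all real $\alpha,\beta$ whenever the right side is not of the form $\infty-\infty$, with $0\times(\pm\infty)=0$), and satisfies $L(1)=1$. Coherence$_1$ (marginal case): $\{P(X_i):i\in I\}$ is coherent$_1$ if for every finite $\{i_1,\dots,i_n\}\subseteq I$, all real $\alpha_1,\dots,\alpha_n$ with $\alpha_j\ge0$ whenever $P(X_{i_j})=+\infty$ and $\alpha_j\le0$ whenever $P(X_{i_j})=-\infty$, and all real $c_1,\dots,c_n$ with $c_j=P(X_{i_j})$ whenever it is finite, $\sup_\omega\sum_{j=1}^n\alpha_j[X_{i_j}(\omega)-c_j]\ge0$. *)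

theory Defs
  imports "HOL-Library.Extended_Real"
begin

definition linear_space_with_constants :: "('a \<Rightarrow> real) set \<Rightarrow> bool" where
  "linear_space_with_constants S \<longleftrightarrow>
     (\<forall>c::real. (\<lambda>_. c) \<in> S) \<and>
     (\<forall>X\<in>S. \<forall>Y\<in>S. \<forall>a b::real. (\<lambda>w. a * X w + b * Y w) \<in> S)"

definition inf_minus_inf :: "ereal \<Rightarrow> ereal \<Rightarrow> bool" where
  "inf_minus_inf u v \<longleftrightarrow> (u = \<infinity> \<and> v = -\<infinity>) \<or> (u = -\<infinity> \<and> v = \<infinity>)"

text \<open>Finitely additive expectation on S (note: in ereal, ereal 0 * (+-infinity) = 0).\<close>
definition fa_expectation :: "('a \<Rightarrow> real) set \<Rightarrow> (('a \<Rightarrow> real) \<Rightarrow> ereal) \<Rightarrow> bool" where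
  "fa_expectation S L \<longleftrightarrow>
     (\<forall>X\<in>S. \<forall>Y\<in>S. (\<forall>w. X w \<le> Y w) \<longrightarrow> L X \<le> L Y) \<and>
     (\<forall>X\<in>S. \<forall>Y\<in>S. \<forall>a b::real.
        \<not> inf_minus_inf (ereal a * L X) (ereal b * L Y) \<longrightarrow>
        L (\<lambda>w. a * X w + b * Y w) = ereal a * L X + ereal b * L Y) \<and>
     L (\<lambda>_. 1) = 1"

text \<open>Coherence_1 of the marginal previsions P i of X i, i in I.  A finite selection
  i_1..i_n of indices is given by idx on {0..<n}.\<close>
definition coherent1 :: "'i set \<Rightarrow> ('i \<Rightarrow> 'a \<Rightarrow> real) \<Rightarrow> ('i \<Rightarrow> ereal) \<Rightarrow> bool" where
  "coherent1 I X P \<longleftrightarrow>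
     (\<forall>(n::nat) (idx::nat \<Rightarrow> 'i) (\<alpha>::nat \<Rightarrow> real) (c::nat \<Rightarrow> real).
        (\<forall>j<n. idx j \<in> I) \<longrightarrow>
        (\<forall>j<n. P (idx j) = \<infinity> \<longrightarrow> \<alpha> j \<ge> 0) \<longrightarrow>
        (\<forall>j<n. P (idx j) = -\<infinity> \<longrightarrow> \<alpha> j \<le> 0) \<longrightarrow>
        (\<forall>j<n. \<bar>P (idx j)\<bar> \<noteq> \<infinity> \<longrightarrow> ereal (c j) = P (idx j)) \<longrightarrow>
        (SUP w. ereal (\<Sum>j<n. \<alpha> j * (X (idx j) w - c j))) \<ge> 0)"

end

theory Submission
  imports Defs
begin

text \<open>Each term \<open>\<alpha>_j (X_j - c_j)\<close> of the gamble has nonnegative expectation: it is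
  \<open>\<alpha>_j (L X_j - c_j) = 0\<close> when \<open>L X_j\<close> is finite, and \<open>+\<infinity>\<close> or \<open>0\<close> by the sign
  conditions otherwise.  As none of these expectations is \<open>-\<infinity>\<close>, linearity applies to
  their sum, which therefore has nonnegative expectation.  Monotonicity against the constant
  \<open>sup Z\<close> gives \<open>L Z \<le> sup Z\<close>, so the supremum is nonnegative.\<close>

lemma linear_space_with_constants_const:
  "linear_space_with_constants S \<Longrightarrow> (\<lambda>_. c) \<in> S"
  unfolding linear_space_with_constants_def by blast

lemma linear_space_with_constants_lin_comb:
  "linear_space_with_constants S \<Longrightarrow> X \<in> S \<Longrightarrow> Y \<in> S \<Longrightarrow> (\<lambda>w. a * X w + b * Y w) \<in> S"
  unfolding linear_space_with_constants_def by blast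

lemma fa_expectation_mono:
  "fa_expectation S L \<Longrightarrow> X \<in> S \<Longrightarrow> Y \<in> S \<Longrightarrow> (\<And>w. X w \<le> Y w) \<Longrightarrow> L X \<le> L Y"
  unfolding fa_expectation_def by blast

lemma fa_expectation_linear:
  "fa_expectation S L \<Longrightarrow> X \<in> S \<Longrightarrow> Y \<in> S \<Longrightarrow>
   \<not> inf_minus_inf (ereal a * L X) (ereal b * L Y) \<Longrightarrow>
   L (\<lambda>w. a * X w + b * Y w) = ereal a * L X + ereal b * L Y"
  unfolding fa_expectation_def by blast

lemma fa_expectation_one: "fa_expectation S L \<Longrightarrow> L (\<lambda>_. 1) = 1"
  unfolding fa_expectation_def by blast

lemma fa_expectation_const:
  assumes lin: "linear_space_with_constants S" and fa: "fa_expectation S L"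
  shows "L (\<lambda>_. r) = ereal r"
proof -
  have one: "(\<lambda>_. 1::real) \<in> S" by (rule linear_space_with_constants_const[OF lin])
  have L1: "L (\<lambda>_. 1) = 1" by (rule fa_expectation_one[OF fa])
  have "L (\<lambda>w. r * 1 + 0 * 1) = ereal r * L (\<lambda>_. 1) + ereal 0 * L (\<lambda>_. 1)"
    by (rule fa_expectation_linear[OF fa one one]) (simp add: L1 inf_minus_inf_def)
  then show ?thesis by (simp add: L1)
qed

lemma fa_expectation_scaled_deviation_nonneg:
  assumes lin: "linear_space_with_constants S" and fa: "fa_expectation S L"
    and Y: "Y \<in> S"
    and pos: "L Y = \<infinity> \<Longrightarrow> a \<ge> 0" and neg: "L Y = -\<infinity> \<Longrightarrow> a \<le> 0"
    and centre: "\<bar>L Y\<bar> \<noteq> \<infinity> \<Longrightarrow> ereal c = L Y"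
  shows "(\<lambda>w. a * (Y w - c)) \<in> S" and "L (\<lambda>w. a * (Y w - c)) \<ge> 0"
proof -
  have one: "(\<lambda>_. 1::real) \<in> S" by (rule linear_space_with_constants_const[OF lin])
  have L1: "L (\<lambda>_. 1) = 1" by (rule fa_expectation_one[OF fa])
  have affine: "(\<lambda>w. a * (Y w - c)) = (\<lambda>w. a * Y w + (- a * c) * 1)"
    by (simp add: algebra_simps)
  show "(\<lambda>w. a * (Y w - c)) \<in> S"
    unfolding affine by (rule linear_space_with_constants_lin_comb[OF lin Y one])
  have "L (\<lambda>w. a * Y w + (- a * c) * 1) = ereal a * L Y + ereal (- a * c) * L (\<lambda>_. 1)"
    by (rule fa_expectation_linear[OF fa Y one]) (simp add: L1 inf_minus_inf_def)
  then have L_affine: "L (\<lambda>w. a * (Y w - c)) = ereal a * L Y + ereal (- a * c)"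
    by (simp add: affine L1)
  have "ereal a * L Y + ereal (- a * c) \<ge> 0"
  proof (cases "L Y")
    case (real r)
    then show ?thesis using centre by simp
  next
    case PInf
    then show ?thesis using pos by (cases "a = 0") auto
  next
    case MInf
    then show ?thesis using neg by (cases "a = 0") auto
  qed
  then show "L (\<lambda>w. a * (Y w - c)) \<ge> 0" by (simp add: L_affine)
qed

lemma fa_expectation_sum_nonneg:
  assumes lin: "linear_space_with_constants S" and fa: "fa_expectation S L"
    and "finite J"
    and G: "\<And>j. j \<in> J \<Longrightarrow> G j \<in> S \<and> L (G j) \<ge> 0"
  shows "(\<lambda>w. \<Sum>j\<in>J. G j w) \<in> S \<and> L (\<lambda>w. \<Sum>j\<in>J. G j w) \<ge> 0"
  using \<open>finite J\<close> G
proof (induction J rule: finite_induct)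
  case empty
  show ?case
    using linear_space_with_constants_const[OF lin] fa_expectation_const[OF lin fa, of 0]
    by simp
next
  case (insert j J)
  define T where "T = (\<lambda>w. \<Sum>j\<in>J. G j w)"
  have T: "T \<in> S" "L T \<ge> 0" and Gj: "G j \<in> S" "L (G j) \<ge> 0"
    using insert by (auto simp: T_def)
  have split: "(\<lambda>w. \<Sum>j\<in>insert j J. G j w) = (\<lambda>w. 1 * G j w + 1 * T w)"
    using insert.hyps by (simp add: T_def)
  have "L (\<lambda>w. 1 * G j w + 1 * T w) = ereal 1 * L (G j) + ereal 1 * L T"
    by (rule fa_expectation_linear[OF fa Gj(1) T(1)])
      (use T Gj in \<open>auto simp: inf_minus_inf_def\<close>)
  then show ?case
    unfolding split
    using linear_space_with_constants_lin_comb[OF lin Gj(1) T(1), of 1 1] T Gj by simp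
qed

lemma fa_expectation_le_SUP:
  assumes lin: "linear_space_with_constants S" and fa: "fa_expectation S L"
    and Z: "Z \<in> S"
  shows "L Z \<le> (SUP w. ereal (Z w))"
proof -
  have upper: "ereal (Z w) \<le> (SUP w. ereal (Z w))" for w
    by (rule SUP_upper) simp
  show ?thesis
  proof (cases "SUP w. ereal (Z w)")
    case (real r)
    have "L Z \<le> L (\<lambda>_. r)"
      using upper real
      by (intro fa_expectation_mono[OF fa Z linear_space_with_constants_const[OF lin]]) simp
    then show ?thesis by (simp add: real fa_expectation_const[OF lin fa])
  next
    case PInf
    then show ?thesis by simp
  next
    case MInf
    then show ?thesis using upper[of undefined] by simp
  qed
qed

theorem lemma5p2:
  fixes I :: "'i set" and X :: "'i \<Rightarrow> 'a \<Rightarrow> real"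
    and L :: "('a \<Rightarrow> real) \<Rightarrow> ereal"
  assumes "linear_space_with_constants (X ` I)"
    and "fa_expectation (X ` I) L"
  shows "coherent1 I X (\<lambda>i. L (X i))"
  unfolding coherent1_def
proof (intro allI impI)
  fix n :: nat and idx :: "nat \<Rightarrow> 'i" and \<alpha> c :: "nat \<Rightarrow> real"
  assume idx: "\<forall>j<n. idx j \<in> I"
    and pos: "\<forall>j<n. L (X (idx j)) = \<infinity> \<longrightarrow> 0 \<le> \<alpha> j"
    and neg: "\<forall>j<n. L (X (idx j)) = - \<infinity> \<longrightarrow> \<alpha> j \<le> 0"
    and centre: "\<forall>j<n. \<bar>L (X (idx j))\<bar> \<noteq> \<infinity> \<longrightarrow> ereal (c j) = L (X (idx j))"
  have "(\<lambda>w. \<alpha> j * (X (idx j) w - c j)) \<in> X ` I \<and> L (\<lambda>w. \<alpha> j * (X (idx j) w - c j)) \<ge> 0"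
    if "j \<in> {..<n}" for j
    using that idx pos neg centre
      fa_expectation_scaled_deviation_nonneg[OF assms, of "X (idx j)" "\<alpha> j" "c j"]
    by auto
  then have "(\<lambda>w. \<Sum>j<n. \<alpha> j * (X (idx j) w - c j)) \<in> X ` I \<and>
      L (\<lambda>w. \<Sum>j<n. \<alpha> j * (X (idx j) w - c j)) \<ge> 0"
    by (rule fa_expectation_sum_nonneg[OF assms finite_lessThan])
  then show "0 \<le> (SUP w. ereal (\<Sum>j<n. \<alpha> j * (X (idx j) w - c j)))"
    using fa_expectation_le_SUP[OF assms] order_trans by blast
qed

end
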